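(* (1) The function $x\mapsto (2-x)K(x)-2E(x)$ is strictly increasing from $(0,1)$ onto $(0,+\infty)$. (2) For all $0<x<1$, $$(2-x)K(x)-2E(x)\ge \frac2\pi\big(E(x)^2-(1-x)K(x)^2\big).$$
   Context: $K(x)={\cal K}(\sqrt x)$ and $E(x)={\cal E}(\sqrt x)$ for $x\in[0,1)$, where ${\cal K}(r)=\int_0^{\pi/2}(1-r^2\sin^2t)^{-1/2}dt$ and ${\cal E}(r)=\int_0^{\pi/2}(1-r^2\sin^2t)^{1/2}dt$ are the complete elliptic integrals of the first and second kind. *)

theory Defs
  imports "HOL-Analysis.Analysis"
begin

text \<open>Complete elliptic integrals of the first and second kind, in the modulus r.\<close>
definition ellK :: "real \<Rightarrow> real" where
  "ellK r = integral {0..pi/2} (\<lambda>t. 1 / sqrt (1 - r\<^sup>2 * (sin t)\<^sup>2))"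

definition ellE :: "real \<Rightarrow> real" where
  "ellE r = integral {0..pi/2} (\<lambda>t. sqrt (1 - r\<^sup>2 * (sin t)\<^sup>2))"

definition K :: "real \<Rightarrow> real" where
  "K x = ellK (sqrt x)"

definition E :: "real \<Rightarrow> real" where
  "E x = ellE (sqrt x)"

end

theory Submission
  imports Defs
begin

text \<open>Write \<open>\<Delta>(t) = sqrt (1 - x sin\<^sup>2 t)\<close> and, over \<open>[0, \<pi>/2]\<close>, \<open>P = \<integral> sin\<^sup>2/\<Delta>\<close>, \<open>Q = \<integral> cos\<^sup>2/\<Delta>\<close>.
Then \<open>K = P + Q\<close> and \<open>E = K - xP\<close>, and integrating the derivative of \<open>sin t cos t/\<Delta>\<close>
gives \<open>Q = 2(1 - x)K'\<close>. Consequently \<open>F = (2 - x)K - 2E\<close> has \<open>F' = xQ/(2(1 - x)) > 0\<close> and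
\<open>G = E\<^sup>2 - (1 - x)K\<^sup>2\<close> has \<open>G' = xP\<^sup>2\<close>. Comparing \<open>\<Delta>\<close> with \<open>1\<close> and with \<open>sqrt (1 - x)\<close> gives
\<open>Q \<ge> \<pi>/4\<close> and \<open>sqrt (1 - x) P \<le> \<pi>/4\<close>, hence \<open>F' \<ge> (2/\<pi>) G'\<close>; as \<open>F(0) = G(0) = 0\<close>, this
yields the inequality. Surjectivity follows from \<open>F(0) = 0\<close>, continuity, and the logarithmic
blow-up \<open>K(c\<^sup>2) \<ge> -ln(1 - c)/2\<close>.\<close>

lemma fundamental_theorem_of_calculus_real:
  fixes F f :: "real \<Rightarrow> real"
  assumes "a \<le> b" "\<And>x. x \<in> {a..b} \<Longrightarrow> (F has_real_derivative f x) (at x)"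
  shows "(f has_integral F b - F a) {a..b}"
  using assms by (intro fundamental_theorem_of_calculus)
    (auto simp: has_real_derivative_iff_has_vector_derivative[symmetric] has_field_derivative_at_within)

lemma parametric_integral_has_real_derivative:
  fixes f fx :: "real \<Rightarrow> real \<Rightarrow> real"
  assumes U: "open U" "convex U" "x \<in> U"
    and f: "\<And>x t. x \<in> U \<Longrightarrow> t \<in> {a..b} \<Longrightarrow> ((\<lambda>x. f x t) has_real_derivative fx x t) (at x)"
    and cont_f: "\<And>x. x \<in> U \<Longrightarrow> continuous_on {a..b} (f x)"
    and cont_fx: "continuous_on (U \<times> {a..b}) (\<lambda>(x, t). fx x t)"
  shows "((\<lambda>x. integral {a..b} (f x)) has_real_derivative integral {a..b} (fx x)) (at x)"
proof -
  have "((\<lambda>x. integral (cbox a b) (f x)) has_real_derivative integral (cbox a b) (fx x)) (at x within U)"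
    using U f cont_f cont_fx
    by (intro leibniz_rule_field_derivative)
      (auto intro: has_field_derivative_at_within integrable_continuous_interval)
  then show ?thesis
    using at_within_open[OF U(3,1)] by simp
qed

lemma integral_sin_squared: "((\<lambda>t. (sin t)\<^sup>2) has_integral pi / 4) {0..pi/2}"
proof -
  let ?F = "\<lambda>t. t / 2 - sin t * cos t / 2"
  have "(?F has_real_derivative (sin t)\<^sup>2) (at t)" for t
    by (auto intro!: derivative_eq_intros simp: power2_eq_square field_simps)
      (use sin_cos_squared_add3[of t] in linarith)
  then have "((\<lambda>t. (sin t)\<^sup>2) has_integral ?F (pi/2) - ?F 0) {0..pi/2}"
    by (intro fundamental_theorem_of_calculus_real) auto
  then show ?thesis by simp
qed

lemma integral_cos_squared: "((\<lambda>t. (cos t)\<^sup>2) has_integral pi / 4) {0..pi/2}"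
proof -
  let ?F = "\<lambda>t. t / 2 + sin t * cos t / 2"
  have "(?F has_real_derivative (cos t)\<^sup>2) (at t)" for t
    by (auto intro!: derivative_eq_intros simp: power2_eq_square field_simps)
      (use sin_cos_squared_add3[of t] in linarith)
  then have "((\<lambda>t. (cos t)\<^sup>2) has_integral ?F (pi/2) - ?F 0) {0..pi/2}"
    by (intro fundamental_theorem_of_calculus_real) auto
  then show ?thesis by simp
qed

abbreviation ellw :: "real \<Rightarrow> real \<Rightarrow> real" where
  "ellw x t \<equiv> 1 - x * (sin t)\<^sup>2"

lemma sin_squared_le_one: "(sin t)\<^sup>2 \<le> (1::real)"
  using sin_cos_squared_add[of t] by (smt (verit) zero_le_power2)

lemma ellw_pos:
  assumes "x < 1"
  shows "0 < ellw x t"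
proof (cases "x \<le> 0")
  case True
  then have "x * (sin t)\<^sup>2 \<le> 0"
    by (simp add: mult_nonpos_nonneg)
  then show ?thesis by simp
next
  case False
  then have "x * (sin t)\<^sup>2 \<le> x"
    using mult_left_mono[OF sin_squared_le_one, of x t] by simp
  then show ?thesis using assms by simp
qed

lemma ellw_simps:
  assumes "x < 1"
  shows "x * (sin t)\<^sup>2 \<le> 1" "\<not> 1 < x * (sin t)\<^sup>2" "x * (sin t)\<^sup>2 \<noteq> 1"
    and "ellw x t \<noteq> 0" "\<bar>ellw x t\<bar> = ellw x t"
  using ellw_pos[OF assms, of t] by auto

lemma ellw_ge: "0 \<le> x \<Longrightarrow> 1 - x \<le> ellw x t"
  using mult_left_mono[OF sin_squared_le_one, of x t] by simp

lemma sin_cos_div_sqrt_ellw_has_derivative: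
  assumes "x < 1"
  shows "((\<lambda>t. sin t * cos t / sqrt (ellw x t)) has_real_derivative
    (cos t)\<^sup>2 / sqrt (ellw x t) - (1 - x) * ((sin t)\<^sup>2 / (ellw x t * sqrt (ellw x t)))) (at t)"
proof -
  define r s c where "r = sqrt (ellw x t)" and "s = sin t" and "c = cos t"
  have r: "0 < r" "r * r = 1 - x * s\<^sup>2"
    using ellw_pos[OF assms, of t] by (auto simp: r_def s_def)
  have sc: "s\<^sup>2 + c\<^sup>2 = 1"
    by (simp add: s_def c_def)
  have "((c * c - s * s) * r + s * c * (inverse r * (c * (s * x)))) / (1 - x * s\<^sup>2)
      = c\<^sup>2 / r - (1 - x) * s\<^sup>2 / ((1 - x * s\<^sup>2) * r)"
    unfolding r(2)[symmetric] using r(1)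
    by (simp add: field_simps) (use r(2) sc in algebra)
  then show ?thesis
    using r by (auto intro!: derivative_eq_intros simp: r_def s_def c_def)
qed

lemma integrable_on_ellw:
  assumes "x < 1"
  shows "(\<lambda>t. 1 / sqrt (ellw x t)) integrable_on {a..b}"
    and "(\<lambda>t. (sin t)\<^sup>2 / sqrt (ellw x t)) integrable_on {a..b}"
    and "(\<lambda>t. (cos t)\<^sup>2 / sqrt (ellw x t)) integrable_on {a..b}"
    and "(\<lambda>t. (sin t)\<^sup>2 / (ellw x t * sqrt (ellw x t))) integrable_on {a..b}"
  using assms by (auto intro!: integrable_continuous_interval continuous_intros simp: ellw_simps)

text \<open>\<open>K\<close> and \<open>E\<close> in the parameter \<open>x\<close>, extended to all \<open>x < 1\<close> so that they are differentiable
on the open set \<open>{..<1}\<close>, which contains \<open>0\<close>.\<close>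

definition K_ext :: "real \<Rightarrow> real" where
  "K_ext x = integral {0..pi/2} (\<lambda>t. 1 / sqrt (ellw x t))"

definition E_ext :: "real \<Rightarrow> real" where
  "E_ext x = integral {0..pi/2} (\<lambda>t. sqrt (ellw x t))"

definition ellP :: "real \<Rightarrow> real" where
  "ellP x = integral {0..pi/2} (\<lambda>t. (sin t)\<^sup>2 / sqrt (ellw x t))"

definition ellQ :: "real \<Rightarrow> real" where
  "ellQ x = integral {0..pi/2} (\<lambda>t. (cos t)\<^sup>2 / sqrt (ellw x t))"

lemma K_eq_K_ext: "0 \<le> x \<Longrightarrow> K x = K_ext x"
  by (simp add: K_def ellK_def K_ext_def)

lemma E_eq_E_ext: "0 \<le> x \<Longrightarrow> E x = E_ext x"
  by (simp add: E_def ellE_def E_ext_def)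

lemma K_ext_0: "K_ext 0 = pi / 2"
  by (simp add: K_ext_def)

lemma E_ext_0: "E_ext 0 = pi / 2"
  by (simp add: E_ext_def)

lemma K_ext_eq_ellP_plus_ellQ:
  assumes "x < 1"
  shows "K_ext x = ellP x + ellQ x"
proof -
  have "K_ext x = integral {0..pi/2} (\<lambda>t. (sin t)\<^sup>2 / sqrt (ellw x t) + (cos t)\<^sup>2 / sqrt (ellw x t))"
    unfolding K_ext_def by (rule integral_cong) (simp add: add_divide_distrib[symmetric])
  also have "\<dots> = ellP x + ellQ x"
    unfolding ellP_def ellQ_def using assms by (intro integral_add integrable_on_ellw)
  finally show ?thesis .
qed

lemma E_ext_eq_K_ext_minus_ellP:
  assumes "x < 1"
  shows "E_ext x = K_ext x - x * ellP x"
proof -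
  have "E_ext x = integral {0..pi/2} (\<lambda>t. 1 / sqrt (ellw x t) - x * ((sin t)\<^sup>2 / sqrt (ellw x t)))"
    unfolding E_ext_def
  proof (rule integral_cong)
    fix t
    have "sqrt (ellw x t) = ellw x t / sqrt (ellw x t)"
      using ellw_pos[OF assms, of t] by (simp add: real_div_sqrt)
    then show "sqrt (ellw x t) = 1 / sqrt (ellw x t) - x * ((sin t)\<^sup>2 / sqrt (ellw x t))"
      by (simp add: diff_divide_distrib)
  qed
  also have "\<dots> = K_ext x - x * ellP x"
    unfolding K_ext_def ellP_def
    by (simp only: integral_diff[OF integrable_on_ellw(1)[OF assms]
        integrable_on_mult_right[OF integrable_on_ellw(2)[OF assms]]] integral_mult_right)
  finally show ?thesis .
qed

lemma ellQ_eq: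
  assumes "x < 1"
  shows "ellQ x = (1 - x) * integral {0..pi/2} (\<lambda>t. (sin t)\<^sup>2 / (ellw x t * sqrt (ellw x t)))"
proof -
  let ?h = "\<lambda>t. (sin t)\<^sup>2 / (ellw x t * sqrt (ellw x t))"
  let ?F = "\<lambda>t. sin t * cos t / sqrt (ellw x t)"
  have "((\<lambda>t. (cos t)\<^sup>2 / sqrt (ellw x t) - (1 - x) * ?h t) has_integral ?F (pi/2) - ?F 0) {0..pi/2}"
    using sin_cos_div_sqrt_ellw_has_derivative[OF assms]
    by (intro fundamental_theorem_of_calculus_real) auto
  \<comment> \<open>the boundary term vanishes since \<open>sin 0 = cos (pi/2) = 0\<close>\<close>
  then have "integral {0..pi/2} (\<lambda>t. (cos t)\<^sup>2 / sqrt (ellw x t) - (1 - x) * ?h t) = 0"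
    by (simp add: integral_unique)
  then show ?thesis
    unfolding ellQ_def
    by (simp only: integral_diff[OF integrable_on_ellw(3)[OF assms]
        integrable_on_mult_right[OF integrable_on_ellw(4)[OF assms]]] integral_mult_right)
qed

lemma K_ext_has_derivative:
  assumes "x < 1"
  shows "(K_ext has_real_derivative ellQ x / (2 * (1 - x))) (at x)"
proof -
  let ?h = "\<lambda>x t. (sin t)\<^sup>2 / (ellw x t * sqrt (ellw x t))"
  have "((\<lambda>x. integral {0..pi/2} (\<lambda>t. 1 / sqrt (ellw x t))) has_real_derivative
      integral {0..pi/2} (\<lambda>t. ?h x t / 2)) (at x)"
    using assms
    by (intro parametric_integral_has_real_derivative[where U = "{..<1}"])
      (auto intro!: derivative_eq_intros continuous_intros
        simp: split_beta ellw_simps ellw_pos field_simps)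
  moreover have "integral {0..pi/2} (\<lambda>t. ?h x t / 2) = ellQ x / (2 * (1 - x))"
    using assms by (simp only: integral_divide) (simp add: ellQ_eq field_simps)
  ultimately show ?thesis
    by (simp add: K_ext_def[abs_def])
qed

lemma E_ext_has_derivative:
  assumes "x < 1"
  shows "(E_ext has_real_derivative - ellP x / 2) (at x)"
proof -
  have "((\<lambda>x. integral {0..pi/2} (\<lambda>t. sqrt (ellw x t))) has_real_derivative
      integral {0..pi/2} (\<lambda>t. - ((sin t)\<^sup>2 / sqrt (ellw x t) / 2))) (at x)"
    using assms
    by (intro parametric_integral_has_real_derivative[where U = "{..<1}"])
      (auto intro!: derivative_eq_intros continuous_intros
        simp: split_beta ellw_simps ellw_pos field_simps)
  moreover have "integral {0..pi/2} (\<lambda>t. - ((sin t)\<^sup>2 / sqrt (ellw x t) / 2)) = - ellP x / 2"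
    by (simp only: integral_neg integral_divide ellP_def)
  ultimately show ?thesis
    by (simp only: E_ext_def[abs_def])
qed

lemma ellP_nonneg: "x < 1 \<Longrightarrow> 0 \<le> ellP x"
  unfolding ellP_def by (intro integral_nonneg integrable_on_ellw) (auto simp: ellw_simps)

lemma pi_div_4_le_ellQ:
  assumes "0 \<le> x" "x < 1"
  shows "pi / 4 \<le> ellQ x"
proof -
  have "integral {0..pi/2} (\<lambda>t. (cos t)\<^sup>2) \<le> ellQ x"
    unfolding ellQ_def
  proof (rule integral_le[OF _ integrable_on_ellw(3)[OF assms(2)]])
    show "(\<lambda>t. (cos t)\<^sup>2) integrable_on {0..pi/2}"
      using integral_cos_squared by blast
    fix t
    have "sqrt (ellw x t) \<le> 1" "0 < sqrt (ellw x t)"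
      using assms ellw_pos[OF assms(2)] by auto
    then show "(cos t)\<^sup>2 \<le> (cos t)\<^sup>2 / sqrt (ellw x t)"
      by (simp add: le_divide_eq mult_left_le)
  qed
  then show ?thesis
    using integral_unique[OF integral_cos_squared] by simp
qed

lemma sqrt_one_minus_mult_ellP_le:
  assumes "0 \<le> x" "x < 1"
  shows "sqrt (1 - x) * ellP x \<le> pi / 4"
proof -
  have "sqrt (1 - x) * ellP x = integral {0..pi/2} (\<lambda>t. sqrt (1 - x) * ((sin t)\<^sup>2 / sqrt (ellw x t)))"
    unfolding ellP_def by (simp only: integral_mult_right)
  also have "\<dots> \<le> integral {0..pi/2} (\<lambda>t. (sin t)\<^sup>2)"
  proof (rule integral_le[OF integrable_on_mult_right[OF integrable_on_ellw(2)[OF assms(2)]]])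
    show "(\<lambda>t. (sin t)\<^sup>2) integrable_on {0..pi/2}"
      using integral_sin_squared by blast
    fix t
    have "sqrt (1 - x) * (sin t)\<^sup>2 \<le> sqrt (ellw x t) * (sin t)\<^sup>2"
      using ellw_ge[OF assms(1)] by (intro mult_right_mono) auto
    then show "sqrt (1 - x) * ((sin t)\<^sup>2 / sqrt (ellw x t)) \<le> (sin t)\<^sup>2"
      using ellw_pos[OF assms(2), of t] by (simp add: divide_simps mult.commute)
  qed
  also have "\<dots> = pi / 4"
    using integral_unique[OF integral_sin_squared] .
  finally show ?thesis .
qed

lemma K_ext_nonneg: "x < 1 \<Longrightarrow> 0 \<le> K_ext x"
  unfolding K_ext_def by (intro integral_nonneg integrable_on_ellw) (auto simp: ellw_simps)

lemma E_ext_le_pi_div_2: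
  assumes "0 \<le> x"
  shows "E_ext x \<le> pi / 2"
proof -
  have "E_ext x \<le> integral {0..pi/2} (\<lambda>t. 1)"
    unfolding E_ext_def using assms
    by (intro integral_le integrable_continuous_interval continuous_intros) auto
  then show ?thesis by simp
qed

lemma inverse_sqrt_ellw_ge:
  assumes c: "0 \<le> c" "c < 1" and t: "t \<in> {0..pi/2}"
  shows "cos t / (2 * (1 - c * sin t)) \<le> 1 / sqrt (ellw (c\<^sup>2) t)"
proof -
  have s: "0 \<le> sin t" "sin t \<le> 1" and "0 \<le> cos t"
    using t by (auto intro: sin_ge_zero cos_ge_zero)
  have cs: "c * sin t \<le> sin t" "0 \<le> c * sin t" "c * sin t < 1"
    using c s mult_left_mono[OF s(2) c(1)] by (auto intro: mult_left_le_one_le)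
  have cos2: "(cos t)\<^sup>2 \<le> 2 * (1 - c * sin t)"
  proof -
    have "(cos t)\<^sup>2 = (1 - sin t) * (1 + sin t)"
      by (simp add: cos_squared_eq algebra_simps power2_eq_square)
    also have "\<dots> \<le> (1 - c * sin t) * 2"
      using s cs by (intro mult_mono) auto
    finally show ?thesis by simp
  qed
  have w: "ellw (c\<^sup>2) t \<le> 2 * (1 - c * sin t)"
  proof -
    have "ellw (c\<^sup>2) t = (1 - c * sin t) * (1 + c * sin t)"
      by (simp add: algebra_simps power2_eq_square)
    also have "\<dots> \<le> (1 - c * sin t) * 2"
      using cs by (intro mult_left_mono) auto
    finally show ?thesis by simp
  qed
  have w_pos: "0 < ellw (c\<^sup>2) t"
    using c by (intro ellw_pos) (simp add: power_less_one_iff)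
  have "(cos t * sqrt (ellw (c\<^sup>2) t))\<^sup>2 = (cos t)\<^sup>2 * ellw (c\<^sup>2) t"
    using w_pos by (simp add: power_mult_distrib)
  also have "\<dots> \<le> (2 * (1 - c * sin t))\<^sup>2"
    unfolding power2_eq_square[of "2 * (1 - c * sin t)"]
    using cos2 w w_pos cs by (intro mult_mono) auto
  finally have "(cos t * sqrt (ellw (c\<^sup>2) t))\<^sup>2 \<le> (2 * (1 - c * sin t))\<^sup>2" .
  then have "cos t * sqrt (ellw (c\<^sup>2) t) \<le> 2 * (1 - c * sin t)"
    by (rule power2_le_imp_le) (use w w_pos in simp)
  then show ?thesis
    using w_pos cs(3) by (simp add: divide_simps mult.commute)
qed

lemma K_ext_ge_ln:
  assumes c: "0 < c" "c < 1"
  shows "- ln (1 - c) / 2 \<le> K_ext (c\<^sup>2)"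
proof -
  let ?F = "\<lambda>t. - ln (1 - c * sin t) / (2 * c)"
  have cs: "c * sin t < 1" for t
    using c mult_left_mono[OF sin_le_one, of c t] by linarith
  have "(?F has_real_derivative cos t / (2 * (1 - c * sin t))) (at t)" for t
    using c cs[of t] by (auto intro!: derivative_eq_intros simp: field_simps)
  then have "((\<lambda>t. cos t / (2 * (1 - c * sin t))) has_integral ?F (pi/2) - ?F 0) {0..pi/2}"
    by (intro fundamental_theorem_of_calculus_real) auto
  moreover have "c\<^sup>2 < 1"
    using c by (simp add: power_less_one_iff)
  ultimately have "?F (pi/2) - ?F 0 \<le> K_ext (c\<^sup>2)"
    unfolding K_ext_def using c
    by (blast intro: has_integral_le integrable_integral integrable_on_ellw(1) inverse_sqrt_ellw_ge less_imp_le)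
  moreover have "- ln (1 - c) / 2 \<le> - ln (1 - c) / (2 * c)"
    using c by (intro divide_left_mono) auto
  ultimately show ?thesis by simp
qed

definition F_ext :: "real \<Rightarrow> real" where
  "F_ext x = (2 - x) * K_ext x - 2 * E_ext x"

definition G_ext :: "real \<Rightarrow> real" where
  "G_ext x = (E_ext x)\<^sup>2 - (1 - x) * (K_ext x)\<^sup>2"

lemma F_ext_has_derivative:
  assumes "x < 1"
  shows "(F_ext has_real_derivative x * ellQ x / (2 * (1 - x))) (at x)"
proof -
  have "((\<lambda>x. (2 - x) * K_ext x - 2 * E_ext x) has_real_derivative
      - K_ext x + (2 - x) * (ellQ x / (2 * (1 - x))) + ellP x) (at x)"
    using K_ext_has_derivative[OF assms] E_ext_has_derivative[OF assms]
    by (auto intro!: derivative_eq_intros)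
  moreover have "- K_ext x + (2 - x) * (ellQ x / (2 * (1 - x))) + ellP x = x * ellQ x / (2 * (1 - x))"
    using assms by (simp add: K_ext_eq_ellP_plus_ellQ field_simps)
  ultimately show ?thesis
    by (simp add: F_ext_def[abs_def])
qed

lemma G_ext_has_derivative:
  assumes "x < 1"
  shows "(G_ext has_real_derivative x * (ellP x)\<^sup>2) (at x)"
proof -
  have "((\<lambda>x. (E_ext x)\<^sup>2 - (1 - x) * (K_ext x)\<^sup>2) has_real_derivative
      2 * E_ext x * (- ellP x / 2) + (K_ext x)\<^sup>2 - (1 - x) * (2 * K_ext x * (ellQ x / (2 * (1 - x))))) (at x)"
    using K_ext_has_derivative[OF assms] E_ext_has_derivative[OF assms]
    by (auto intro!: derivative_eq_intros)
  moreover have "2 * E_ext x * (- ellP x / 2) + (K_ext x)\<^sup>2 - (1 - x) * (2 * K_ext x * (ellQ x / (2 * (1 - x))))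
      = x * (ellP x)\<^sup>2"
    using assms
    by (simp add: E_ext_eq_K_ext_minus_ellP K_ext_eq_ellP_plus_ellQ field_simps power2_eq_square)
  ultimately show ?thesis
    by (simp add: G_ext_def[abs_def])
qed

lemma F_ext_0: "F_ext 0 = 0"
  by (simp add: F_ext_def K_ext_0 E_ext_0)

lemma G_ext_0: "G_ext 0 = 0"
  by (simp add: G_ext_def K_ext_0 E_ext_0)

lemma continuous_on_F_ext: "S \<subseteq> {..<1} \<Longrightarrow> continuous_on S F_ext"
  by (intro continuous_at_imp_continuous_on ballI DERIV_isCont[OF F_ext_has_derivative]) auto

lemma continuous_on_G_ext: "S \<subseteq> {..<1} \<Longrightarrow> continuous_on S G_ext"
  by (intro continuous_at_imp_continuous_on ballI DERIV_isCont[OF G_ext_has_derivative]) auto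

lemma F_ext_strict_mono: "strict_mono_on {0..<1} F_ext"
proof (rule strict_mono_onI)
  fix a b :: real
  assume ab: "a \<in> {0..<1}" "b \<in> {0..<1}" "a < b"
  show "F_ext a < F_ext b"
  proof (rule DERIV_pos_imp_increasing_open[OF \<open>a < b\<close>])
    fix x assume x: "a < x" "x < b"
    with ab have "0 < x" "x < 1" by auto
    moreover have "0 < ellQ x"
      using pi_div_4_le_ellQ[of x] \<open>0 < x\<close> \<open>x < 1\<close> pi_gt_zero by linarith
    ultimately show "\<exists>y. (F_ext has_real_derivative y) (at x) \<and> 0 < y"
      using F_ext_has_derivative[of x] by (intro exI[of _ "x * ellQ x / (2 * (1 - x))"] conjI) (auto intro!: divide_pos_pos)
  qed (use ab in \<open>auto intro: continuous_on_F_ext\<close>)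
qed

lemma G_ext_le_F_ext:
  assumes "0 \<le> x" "x < 1"
  shows "2 / pi * G_ext x \<le> F_ext x"
proof -
  define \<Phi> where "\<Phi> y = F_ext y - 2 / pi * G_ext y" for y
  have "\<Phi> 0 \<le> \<Phi> x"
  proof (rule DERIV_nonneg_imp_increasing_open[OF assms(1)])
    fix y assume y: "0 < y" "y < x"
    then have y1: "y < 1" using assms by simp
    have "4 * ((1 - y) * (ellP y)\<^sup>2) = 4 * (sqrt (1 - y) * ellP y)\<^sup>2"
      using y1 by (simp add: power_mult_distrib)
    also have "\<dots> \<le> 4 * (pi / 4)\<^sup>2"
      using sqrt_one_minus_mult_ellP_le[of y] ellP_nonneg[OF y1] y y1
      by (intro mult_left_mono power_mono) auto
    also have "\<dots> \<le> pi * ellQ y"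
      using pi_div_4_le_ellQ[of y] y y1 by (simp add: power2_eq_square)
    finally have key: "0 \<le> pi * ellQ y - 4 * ((1 - y) * (ellP y)\<^sup>2)"
      by simp
    have "y * ellQ y / (2 * (1 - y)) - 2 / pi * (y * (ellP y)\<^sup>2)
        = y * (pi * ellQ y - 4 * ((1 - y) * (ellP y)\<^sup>2)) / (2 * pi * (1 - y))"
      using y1 by (simp add: field_simps)
    also have "0 \<le> \<dots>"
      using key y y1 by simp
    finally have "0 \<le> y * ellQ y / (2 * (1 - y)) - 2 / pi * (y * (ellP y)\<^sup>2)" .
    moreover have "(\<Phi> has_real_derivative y * ellQ y / (2 * (1 - y)) - 2 / pi * (y * (ellP y)\<^sup>2)) (at y)"
      unfolding \<Phi>_def[abs_def] using y1
      by (auto intro!: derivative_eq_intros F_ext_has_derivative G_ext_has_derivative)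
    ultimately show "\<exists>d. (\<Phi> has_real_derivative d) (at y) \<and> 0 \<le> d"
      by blast
  qed (use assms in \<open>auto simp: \<Phi>_def[abs_def] intro!: continuous_intros continuous_on_F_ext continuous_on_G_ext\<close>)
  then show ?thesis
    by (simp add: \<Phi>_def F_ext_0 G_ext_0)
qed

lemma F_ext_unbounded:
  assumes "0 < y"
  shows "\<exists>x\<in>{0..<1}. y \<le> F_ext x"
proof -
  define c where "c = 1 - exp (- 2 * (y + pi))"
  have "0 < y + pi"
    using assms pi_gt_zero by linarith
  then have c: "0 < c" "c < 1"
    by (auto simp: c_def)
  have x: "0 \<le> c\<^sup>2" "c\<^sup>2 < 1"
    using c by (auto simp: power_less_one_iff)
  have "y + pi \<le> K_ext (c\<^sup>2)"
    using K_ext_ge_ln[OF c] by (simp add: c_def)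
  moreover have "K_ext (c\<^sup>2) \<le> (2 - c\<^sup>2) * K_ext (c\<^sup>2)"
    using K_ext_nonneg[OF x(2)] x by (simp add: algebra_simps mult_left_le_one_le)
  moreover have "E_ext (c\<^sup>2) \<le> pi / 2"
    using E_ext_le_pi_div_2[OF x(1)] .
  ultimately have "y \<le> F_ext (c\<^sup>2)"
    unfolding F_ext_def by linarith
  then show ?thesis
    using x by auto
qed

lemma F_ext_image: "F_ext ` {0<..<1} = {0<..}"
proof
  show "F_ext ` {0<..<1} \<subseteq> {0<..}"
    using strict_mono_onD[OF F_ext_strict_mono, of 0] F_ext_0 by auto
  show "{0<..} \<subseteq> F_ext ` {0<..<1}"
  proof
    fix y :: real
    assume "y \<in> {0<..}"
    then have y: "0 < y" by simp
    then obtain b where b: "b \<in> {0..<1}" "y \<le> F_ext b"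
      using F_ext_unbounded by blast
    moreover have "continuous_on {0..b} F_ext"
      using b by (intro continuous_on_F_ext) auto
    ultimately obtain z where z: "0 \<le> z" "z \<le> b" "F_ext z = y"
      using IVT'[of F_ext 0 y b] F_ext_0 y by auto
    moreover have "z \<noteq> 0"
      using z y F_ext_0 by auto
    ultimately show "y \<in> F_ext ` {0<..<1}"
      using b by (intro image_eqI[of _ _ z]) auto
  qed
qed

theorem mainTheorem6:
  shows "strict_mono_on {0<..<1} (\<lambda>x. (2 - x) * K x - 2 * E x)
       \<and> (\<lambda>x. (2 - x) * K x - 2 * E x) ` {0<..<1} = {0<..}
       \<and> (\<forall>x::real. 0 < x \<and> x < 1 \<longrightarrow>
            (2 - x) * K x - 2 * E x \<ge> 2 / pi * ((E x)\<^sup>2 - (1 - x) * (K x)\<^sup>2))"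
proof (intro conjI allI impI)
  have F: "(2 - x) * K x - 2 * E x = F_ext x" if "0 \<le> x" for x
    using that by (simp add: F_ext_def K_eq_K_ext E_eq_E_ext)
  show "strict_mono_on {0<..<1} (\<lambda>x. (2 - x) * K x - 2 * E x)"
  proof (rule strict_mono_onI)
    fix r s :: real
    assume "r \<in> {0<..<1}" "s \<in> {0<..<1}" "r < s"
    then show "(2 - r) * K r - 2 * E r < (2 - s) * K s - 2 * E s"
      using strict_mono_onD[OF F_ext_strict_mono, of r s] by (simp add: F)
  qed
  show "(\<lambda>x. (2 - x) * K x - 2 * E x) ` {0<..<1} = {0<..}"
  proof -
    have "(\<lambda>x. (2 - x) * K x - 2 * E x) ` {0<..<1} = F_ext ` {0<..<1}"
      by (rule image_cong) (auto simp: F)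
    then show ?thesis
      using F_ext_image by simp
  qed
  fix x :: real
  assume "0 < x \<and> x < 1"
  then show "2 / pi * ((E x)\<^sup>2 - (1 - x) * (K x)\<^sup>2) \<le> (2 - x) * K x - 2 * E x"
    using G_ext_le_F_ext[of x] by (simp add: F_ext_def G_ext_def K_eq_K_ext E_eq_E_ext)
qed

end
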